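(* Let $X$ be a Banach space isomorphic to a Hilbert space. Then for every nonempty bounded closed convex $C\subset X$, every $\mathfrak{cm}$-nonexpansive map $T\colon C\to C$ has a fixed point.
   Context: For a bounded convex set $C$, a nonexpansive map $T\colon C\to C$ is $\mathfrak{cm}$-nonexpansive if for all $n\in\mathbb{N}$, $y\in C$ and sequences $(u_i)_{i=1}^\infty\subset C$: $\limsup_{i\to\infty}\sup_{A\subset\{1,\dots,n\}}\|\sum_{k\in A}(Tu_{i+k}-Ty)\|\le\limsup_{i\to\infty}\sup_{A\subset\{1,\dots,n\}}\|\sum_{k\in A}(u_{i+k}-y)\|$, where $\|\cdot\|$ is the norm of $X$. *)

theory Defs
  imports "HOL-Analysis.Analysis"
begin

definition nonexpansive_on :: "'a::real_normed_vector set \<Rightarrow> ('a \<Rightarrow> 'a) \<Rightarrow> bool" where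
  "nonexpansive_on C T \<longleftrightarrow> (\<forall>x\<in>C. \<forall>y\<in>C. norm (T x - T y) \<le> norm (x - y))"

definition cm_block :: "nat \<Rightarrow> (nat \<Rightarrow> 'a::real_normed_vector) \<Rightarrow> 'a \<Rightarrow> nat \<Rightarrow> real" where
  "cm_block n v y i = Max ((\<lambda>A. norm (\<Sum>k\<in>A. (v (i + k) - y))) ` Pow {1..n})"

definition cm_nonexpansive_on :: "'a::real_normed_vector set \<Rightarrow> ('a \<Rightarrow> 'a) \<Rightarrow> bool" where
  "cm_nonexpansive_on C T \<longleftrightarrow> nonexpansive_on C T \<and>
     (\<forall>n::nat. \<forall>y\<in>C. \<forall>u::nat \<Rightarrow> 'a. (\<forall>i. u i \<in> C) \<longrightarrow>
        limsup (\<lambda>i. ereal (cm_block n (\<lambda>j. T (u j)) (T y) i))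
          \<le> limsup (\<lambda>i. ereal (cm_block n u y i)))"

end

theory Submission
  imports Defs "HOL-Library.Diagonal_Subsequence"
begin

text \<open>
  A nonexpansive self-map \<open>T\<close> of a bounded closed convex set \<open>C\<close> has approximate fixed
  points \<open>x m\<close>, i.e. \<open>T (x m) - x m \<longlonglongrightarrow> 0\<close>. Transported into the Hilbert space by \<open>J\<close>,
  a subsequence can be chosen along which the Gram matrix converges off the diagonal; then the
  Cesaro means converge to some \<open>J z\<close> with \<open>z \<in> C\<close>, and the vectors \<open>J (x a) - J z\<close> are
  asymptotically orthogonal. Consequently the block sums of \<open>x (i + k) - z\<close> over
  \<open>k \<in> A \<subseteq> {1..n}\<close> are eventually of order \<open>\<surd>n\<close>, whereas, if \<open>T z \<noteq> z\<close>, the block sum of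
  \<open>T (x (i + k)) - T z\<close> over \<open>{1..n}\<close> is eventually at least \<open>n \<parallel>z - T z\<parallel> / 2\<close>. For large \<open>n\<close>
  this contradicts cm-nonexpansiveness at the point \<open>z\<close>.
\<close>

definition cesaro_mean :: "(nat \<Rightarrow> 'a::real_vector) \<Rightarrow> nat \<Rightarrow> 'a" where
  "cesaro_mean w N = inverse (real (Suc N)) *\<^sub>R (\<Sum>a\<le>N. w a)"

lemma cesaro_mean_const [simp]: "cesaro_mean (\<lambda>_. c) N = c"
  by (simp add: cesaro_mean_def sum_constant_scaleR)

lemma cesaro_mean_add: "cesaro_mean (\<lambda>a. f a + g a) N = cesaro_mean f N + cesaro_mean g N"
  by (simp add: cesaro_mean_def sum.distrib scaleR_add_right)

lemma cesaro_mean_diff: "cesaro_mean (\<lambda>a. f a - g a) N = cesaro_mean f N - cesaro_mean g N"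
  by (simp add: cesaro_mean_def sum_subtractf scaleR_diff_right)

lemma linear_cesaro_mean: "linear J \<Longrightarrow> J (cesaro_mean w N) = cesaro_mean (\<lambda>a. J (w a)) N"
  by (simp add: cesaro_mean_def linear_scale linear_sum)

lemma inner_cesaro_mean_left: "inner (cesaro_mean w N) y = cesaro_mean (\<lambda>a. inner (w a) y) N"
  using linear_cesaro_mean[OF bounded_linear.linear[OF bounded_linear_inner_left]] .

lemma inner_cesaro_mean_right: "inner x (cesaro_mean w N) = cesaro_mean (\<lambda>a. inner x (w a)) N"
  using linear_cesaro_mean[OF bounded_linear.linear[OF bounded_linear_inner_right]] .

lemma cesaro_mean_real: "cesaro_mean f N = (\<Sum>a\<le>N. f a) / real (Suc N)"
  by (simp add: cesaro_mean_def divide_inverse_commute del: of_nat_Suc)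

lemma cesaro_mean_mono:
  fixes f g :: "nat \<Rightarrow> real"
  shows "(\<And>a. a \<le> N \<Longrightarrow> f a \<le> g a) \<Longrightarrow> cesaro_mean f N \<le> cesaro_mean g N"
  unfolding cesaro_mean_real by (intro divide_right_mono sum_mono) auto

lemma abs_cesaro_mean_diff_le:
  fixes f h :: "nat \<Rightarrow> real"
  assumes "\<And>a. a \<le> N \<Longrightarrow> \<bar>f a - L\<bar> \<le> h a"
  shows "\<bar>cesaro_mean f N - L\<bar> \<le> cesaro_mean h N"
proof -
  have "\<bar>cesaro_mean f N - L\<bar> = \<bar>cesaro_mean (\<lambda>a. f a - L) N\<bar>"
    by (simp add: cesaro_mean_diff)
  also have "\<dots> \<le> cesaro_mean (\<lambda>a. \<bar>f a - L\<bar>) N"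
    unfolding cesaro_mean_real by (simp add: divide_right_mono sum_abs del: of_nat_Suc)
  also have "\<dots> \<le> cesaro_mean h N"
    using assms by (rule cesaro_mean_mono)
  finally show ?thesis .
qed

lemma cesaro_mean_in_convex:
  assumes "convex C" and "\<And>a. w a \<in> C"
  shows "cesaro_mean w N \<in> C"
  unfolding cesaro_mean_def scaleR_sum_right
  by (rule convex_sum) (use assms in \<open>auto simp del: of_nat_Suc\<close>)

lemma norm_cesaro_mean_le: "norm (cesaro_mean w N) \<le> cesaro_mean (\<lambda>a. norm (w a)) N"
  unfolding cesaro_mean_def cesaro_mean_real[unfolded cesaro_mean_def]
  by (simp add: divide_inverse_commute divide_right_mono norm_sum del: of_nat_Suc)

lemma const_over_Suc_tendsto_zero: "(\<lambda>N. c / real (Suc N)) \<longlonglongrightarrow> 0"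
  using LIMSEQ_Suc[OF lim_const_over_n[of c]] by simp

lemma cesaro_mean_tendsto_zero:
  fixes f :: "nat \<Rightarrow> 'a::real_normed_vector"
  assumes "f \<longlonglongrightarrow> 0"
  shows "cesaro_mean f \<longlonglongrightarrow> 0"
proof (rule Lim_null_comparison[OF always_eventually[OF allI[OF norm_cesaro_mean_le]]])
  show "(\<lambda>N. cesaro_mean (\<lambda>a. norm (f a)) N) \<longlonglongrightarrow> 0"
  proof (rule LIMSEQ_I)
    fix e :: real assume "0 < e"
    then obtain N1 where N1: "\<And>a. a \<ge> N1 \<Longrightarrow> norm (f a) < e / 2"
      using order_tendstoD(2)[OF tendsto_norm_zero[OF assms], of "e / 2"]
      unfolding eventually_sequentially by auto
    define S where "S = (\<Sum>a<N1. norm (f a))"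
    have "(\<Sum>a\<le>N. norm (f a)) \<le> S + real (Suc N) * (e / 2)" for N
    proof -
      have "(\<Sum>a\<le>N. norm (f a)) \<le> (\<Sum>a\<le>N. (if a < N1 then norm (f a) else 0) + e / 2)"
        using N1 \<open>0 < e\<close> by (intro sum_mono) (auto simp: not_less less_imp_le)
      also have "\<dots> = (\<Sum>a\<in>{..N} \<inter> {..<N1}. norm (f a)) + real (Suc N) * (e / 2)"
        by (simp add: sum.distrib sum.inter_restrict del: of_nat_Suc)
      also have "\<dots> \<le> S + real (Suc N) * (e / 2)"
        unfolding S_def by (intro add_right_mono sum_mono2) auto
      finally show ?thesis .
    qed
    then have "(\<Sum>a\<le>N. norm (f a)) / real (Suc N) \<le>
        (S + real (Suc N) * (e / 2)) / real (Suc N)" for N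
      by (rule divide_right_mono) simp
    then have bound: "cesaro_mean (\<lambda>a. norm (f a)) N \<le> S / real (Suc N) + e / 2" for N
      unfolding cesaro_mean_real by (simp add: add_divide_distrib del: of_nat_Suc)
    obtain N2 where N2: "\<And>N. N \<ge> N2 \<Longrightarrow> S / real (Suc N) < e / 2"
      using order_tendstoD(2)[OF const_over_Suc_tendsto_zero[of S], of "e / 2"] \<open>0 < e\<close>
      unfolding eventually_sequentially by auto
    have "0 \<le> cesaro_mean (\<lambda>a. norm (f a)) N" for N
      unfolding cesaro_mean_real by (simp add: sum_nonneg)
    moreover have "cesaro_mean (\<lambda>a. norm (f a)) N < e" if "N \<ge> N2" for N
      using bound[of N] N2[OF that] by linarith
    ultimately show "\<exists>N0. \<forall>N\<ge>N0. norm (cesaro_mean (\<lambda>a. norm (f a)) N - 0) < e"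
      by auto
  qed
qed

lemma strict_mono_subseq_eventually_pairs:
  assumes "\<And>a. eventually (\<lambda>b. P a b) sequentially"
  shows "\<exists>r :: nat \<Rightarrow> nat. strict_mono r \<and> (\<forall>a b. a < b \<longrightarrow> P (r a) (r b))"
proof -
  have thresholds: "\<forall>a. \<exists>N. \<forall>b\<ge>N. P a b"
    using assms by (simp add: eventually_sequentially)
  obtain N where "\<forall>a. \<forall>b\<ge>N a. P a b"
    using choice[OF thresholds] by (elim exE)
  then have N: "\<And>a b. b \<ge> N a \<Longrightarrow> P a b"
    by simp
  define r where "r = rec_nat 0 (\<lambda>_ m. max (Suc m) (N m))"
  have r_Suc: "r (Suc n) = max (Suc (r n)) (N (r n))" for n
    by (simp add: r_def)
  have mono: "strict_mono r"
    unfolding strict_mono_Suc_iff r_Suc by (simp add: less_max_iff_disj)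
  have "P (r a) (r b)" if "a < b" for a b
  proof (rule N)
    have "N (r a) \<le> r (Suc a)" by (simp add: r_Suc)
    also have "\<dots> \<le> r b" using that by (simp add: strict_mono_less_eq[OF mono])
    finally show "N (r a) \<le> r b" .
  qed
  with mono show ?thesis
    by blast
qed

lemma diagonal_convergent_subseq:
  fixes f :: "nat \<Rightarrow> nat \<Rightarrow> 'a::heine_borel"
  assumes "\<And>k. bounded (range (f k))"
  shows "\<exists>d. strict_mono d \<and> (\<forall>k. convergent (\<lambda>b. f k (d b)))"
proof -
  interpret subseqs "\<lambda>k s. convergent (\<lambda>b. f k (s b))"
  proof
    fix k and s :: "nat \<Rightarrow> nat"
    have row: "bounded (range (\<lambda>b. f k (s b)))"
      using assms by (rule bounded_subset) auto
    obtain l r where "strict_mono r" "((\<lambda>b. f k (s b)) \<circ> r) \<longlonglongrightarrow> l"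
      using bounded_imp_convergent_subsequence[OF row] by blast
    then show "\<exists>r. strict_mono r \<and> convergent (\<lambda>b. f k ((s \<circ> r) b))"
      unfolding convergent_def o_def by blast
  qed
  have "convergent (\<lambda>b. f k (diagseq b))" for k
  proof -
    have "convergent (\<lambda>b. f k ((diagseq \<circ> (+) (Suc k)) b))"
    proof (rule diagseq_holds)
      fix r s :: "nat \<Rightarrow> nat" and n
      assume "strict_mono r" and "convergent (\<lambda>b. f n (s b))"
      then show "convergent (\<lambda>b. f n ((s \<circ> r) b))"
        using convergent_subseq_convergent[of "\<lambda>b. f n (s b)" r] by (simp add: o_def)
    qed
    then have "convergent (\<lambda>b. f k (diagseq (b + Suc k)))"
      by (simp add: o_def add.commute)
    then show ?thesis
      by (rule convergent_ignore_initial_segment[THEN iffD1])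
  qed
  with subseq_diagseq show ?thesis by blast
qed

lemma rows_and_row_limits_convergent_subseq:
  fixes g :: "nat \<Rightarrow> nat \<Rightarrow> 'a::heine_borel"
  assumes "bounded (range (case_prod g))"
  shows "\<exists>v M L. strict_mono v \<and> (\<forall>a. (\<lambda>b. g (v a) (v b)) \<longlonglongrightarrow> M a) \<and> M \<longlonglongrightarrow> L"
proof -
  have rows_bounded: "bounded (range (g k))" for k
    using assms by (rule bounded_subset) auto
  obtain d where d: "strict_mono d" "\<And>k. convergent (\<lambda>b. g k (d b))"
    using diagonal_convergent_subseq[of g, OF rows_bounded] by blast
  define M where "M k = lim (\<lambda>b. g k (d b))" for k
  have M: "(\<lambda>b. g k (d b)) \<longlonglongrightarrow> M k" for k
    unfolding M_def using d(2) convergent_LIMSEQ_iff by blast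
  have "M k \<in> closure (range (case_prod g))" for k
    unfolding closure_sequential by (rule exI[of _ "\<lambda>b. g k (d b)"]) (use M in auto)
  then have "range (\<lambda>a. M (d a)) \<subseteq> closure (range (case_prod g))"
    by auto
  then have limits_bounded: "bounded (range (\<lambda>a. M (d a)))"
    using bounded_closure[OF assms] bounded_subset by blast
  obtain r L where r: "strict_mono r" "((\<lambda>a. M (d a)) \<circ> r) \<longlonglongrightarrow> L"
    using bounded_imp_convergent_subsequence[OF limits_bounded] by blast
  define v where "v = d \<circ> r"
  have "strict_mono v"
    unfolding v_def using d(1) r(1) by (rule strict_mono_o)
  moreover have "(\<lambda>b. g (v a) (v b)) \<longlonglongrightarrow> M (v a)" for a
    using LIMSEQ_subseq_LIMSEQ[OF M[of "v a"] r(1)] by (simp add: v_def o_def)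
  moreover have "(\<lambda>a. M (v a)) \<longlonglongrightarrow> L"
    using r(2) by (simp add: v_def o_def)
  ultimately show ?thesis
    by (intro exI[of _ v] exI[of _ "\<lambda>a. M (v a)"] exI[of _ L]) auto
qed

lemma offdiagonal_convergent_subseq:
  fixes g :: "nat \<Rightarrow> nat \<Rightarrow> 'a::heine_borel"
  assumes "bounded (range (case_prod g))"
  shows "\<exists>r L \<eta>. strict_mono r \<and> \<eta> \<longlonglongrightarrow> 0 \<and>
           (\<forall>a b. a < b \<longrightarrow> dist (g (r a) (r b)) L \<le> \<eta> a)"
proof -
  obtain v M L where v: "strict_mono v" and M: "\<And>a. (\<lambda>b. g (v a) (v b)) \<longlonglongrightarrow> M a"
    and L: "M \<longlonglongrightarrow> L"
    using rows_and_row_limits_convergent_subseq[OF assms] by blast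
  have "eventually (\<lambda>b. dist (g (v a) (v b)) (M a) < inverse (real (Suc a))) sequentially" for a
    using M by (rule tendstoD) simp
  then obtain r :: "nat \<Rightarrow> nat" where r: "strict_mono r"
    and near: "\<And>a b. a < b \<Longrightarrow>
      dist (g (v (r a)) (v (r b))) (M (r a)) < inverse (real (Suc (r a)))"
    using strict_mono_subseq_eventually_pairs[where
        P = "\<lambda>a b. dist (g (v a) (v b)) (M a) < inverse (real (Suc a))"]
    by blast
  define \<eta> where "\<eta> a = inverse (real (Suc (r a))) + dist (M (r a)) L" for a
  have "(\<lambda>a. M (r a)) \<longlonglongrightarrow> L"
    using LIMSEQ_subseq_LIMSEQ[OF L r] by (simp add: o_def)
  then have "(\<lambda>a. dist (M (r a)) L) \<longlonglongrightarrow> 0"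
    by (rule tendsto_dist_iff[THEN iffD1])
  moreover have "(\<lambda>a. inverse (real (Suc (r a)))) \<longlonglongrightarrow> 0"
    using LIMSEQ_subseq_LIMSEQ[OF LIMSEQ_inverse_real_of_nat r] by (simp add: o_def)
  ultimately have "\<eta> \<longlonglongrightarrow> 0"
    unfolding \<eta>_def by (rule tendsto_add_zero[rotated])
  moreover have "dist (g (v (r a)) (v (r b))) L \<le> \<eta> a" if "a < b" for a b
    using dist_triangle[of "g (v (r a)) (v (r b))" L "M (r a)"] near[OF that]
    unfolding \<eta>_def by linarith
  moreover have "strict_mono (v \<circ> r)"
    using v r by (rule strict_mono_o)
  ultimately show ?thesis
    by (intro exI[of _ "v \<circ> r"] exI[of _ L] exI[of _ \<eta>]) auto
qed

definition asymptotically_orthogonal :: "(nat \<Rightarrow> 'a::real_inner) \<Rightarrow> bool" where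
  "asymptotically_orthogonal v \<longleftrightarrow>
     (\<forall>e>0. \<exists>N. \<forall>a\<ge>N. \<forall>b\<ge>N. a \<noteq> b \<longrightarrow> \<bar>inner (v a) (v b)\<bar> \<le> e)"

lemma asymptotically_orthogonalI:
  assumes "\<theta> \<longlonglongrightarrow> 0" and "\<And>a b. a \<noteq> b \<Longrightarrow> \<bar>inner (v a) (v b)\<bar> \<le> \<theta> a + \<theta> b"
  shows "asymptotically_orthogonal v"
  unfolding asymptotically_orthogonal_def
proof (intro allI impI)
  fix e :: real assume "0 < e"
  then obtain N where N: "\<And>a. a \<ge> N \<Longrightarrow> \<theta> a < e / 2"
    using order_tendstoD(2)[OF assms(1), of "e / 2"] unfolding eventually_sequentially by auto
  show "\<exists>N. \<forall>a\<ge>N. \<forall>b\<ge>N. a \<noteq> b \<longrightarrow> \<bar>inner (v a) (v b)\<bar> \<le> e"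
  proof (intro exI allI impI)
    fix a b assume "N \<le> a" "N \<le> b" "a \<noteq> b"
    then show "\<bar>inner (v a) (v b)\<bar> \<le> e"
      using assms(2)[of a b] N[of a] N[of b] by linarith
  qed
qed

lemma Cauchy_if_inner_near_const:
  fixes s :: "nat \<Rightarrow> 'a::real_inner"
  assumes "e \<longlonglongrightarrow> 0" and near: "\<And>m n. \<bar>inner (s m) (s n) - L\<bar> \<le> e m + e n"
  shows "Cauchy s"
proof (rule metric_CauchyI)
  fix \<epsilon> :: real assume "0 < \<epsilon>"
  then obtain M where M: "\<And>m. m \<ge> M \<Longrightarrow> e m < \<epsilon>\<^sup>2 / 8"
    using order_tendstoD(2)[OF assms(1), of "\<epsilon>\<^sup>2 / 8"] unfolding eventually_sequentially by auto
  have "dist (s m) (s n) < \<epsilon>" if "m \<ge> M" "n \<ge> M" for m n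
  proof -
    have "(dist (s m) (s n))\<^sup>2 =
        (inner (s m) (s m) - L) - 2 * (inner (s m) (s n) - L) + (inner (s n) (s n) - L)"
      by (simp add: dist_norm power2_norm_eq_inner inner_diff_left inner_diff_right inner_commute)
    also have "\<dots> \<le> 4 * (e m + e n)"
      using near[of m m] near[of m n] near[of n n] by (simp add: abs_le_iff)
    also have "\<dots> < \<epsilon>\<^sup>2"
      using M[OF that(1)] M[OF that(2)] by (simp add: field_simps)
    finally show ?thesis
      using \<open>0 < \<epsilon>\<close> by (simp add: power_less_imp_less_base)
  qed
  then show "\<exists>M. \<forall>m\<ge>M. \<forall>n\<ge>M. dist (s m) (s n) < \<epsilon>" by blast
qed

lemma inner_cesaro_mean_bound:
  fixes w :: "nat \<Rightarrow> 'a::real_inner"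
  assumes gram: "\<And>a b. \<bar>inner (w a) (w b) - L\<bar> \<le> \<eta> a + \<eta> b + (if a = b then K else 0)"
    and "0 \<le> K"
  shows "\<bar>inner (cesaro_mean w N) (w b) - L\<bar> \<le> cesaro_mean \<eta> N + \<eta> b + K / real (Suc N)"
proof -
  have "\<bar>inner (cesaro_mean w N) (w b) - L\<bar> \<le>
      cesaro_mean (\<lambda>a. \<eta> a + \<eta> b + (if a = b then K else 0)) N"
    unfolding inner_cesaro_mean_left by (rule abs_cesaro_mean_diff_le) (rule gram)
  also have "\<dots> = cesaro_mean \<eta> N + \<eta> b + cesaro_mean (\<lambda>a. if a = b then K else 0) N"
    by (simp add: cesaro_mean_add)
  also have "cesaro_mean (\<lambda>a. if a = b then K else 0) N \<le> K / real (Suc N)"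
    unfolding cesaro_mean_real using \<open>0 \<le> K\<close> by (simp add: divide_right_mono del: of_nat_Suc)
  finally show ?thesis by simp
qed

lemma inner_cesaro_means_bound:
  fixes w :: "nat \<Rightarrow> 'a::real_inner"
  assumes "\<And>a b. \<bar>inner (w a) (w b) - L\<bar> \<le> \<eta> a + \<eta> b + (if a = b then K else 0)"
    and "0 \<le> K"
  shows "\<bar>inner (cesaro_mean w N) (cesaro_mean w M) - L\<bar> \<le>
    cesaro_mean \<eta> N + cesaro_mean \<eta> M + K / real (Suc N)"
proof -
  have "\<bar>inner (cesaro_mean w N) (cesaro_mean w M) - L\<bar> \<le>
      cesaro_mean (\<lambda>b. cesaro_mean \<eta> N + \<eta> b + K / real (Suc N)) M"
    unfolding inner_cesaro_mean_right
    by (rule abs_cesaro_mean_diff_le) (rule inner_cesaro_mean_bound[OF assms])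
  then show ?thesis by (simp add: cesaro_mean_add)
qed

lemma offdiagonal_gram_bound_symmetric:
  fixes w :: "nat \<Rightarrow> 'a::real_inner"
  assumes bounded: "\<And>a. norm (w a) \<le> B"
    and offdiag: "\<And>a b. a < b \<Longrightarrow> \<bar>inner (w a) (w b) - L\<bar> \<le> \<eta> a"
  shows "\<bar>inner (w a) (w b) - L\<bar> \<le> \<eta> a + \<eta> b + (if a = b then B * B + \<bar>L\<bar> else 0)"
proof -
  have \<eta>_nonneg: "0 \<le> \<eta> a" for a
    using offdiag[of a "Suc a"] by linarith
  show ?thesis
  proof (cases a b rule: linorder_cases)
    case less
    then show ?thesis using offdiag[OF less] \<eta>_nonneg[of b] by simp
  next
    case greater
    then show ?thesis using offdiag[OF greater] \<eta>_nonneg[of a] by (simp add: inner_commute)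
  next
    case equal
    have "\<bar>inner (w a) (w a)\<bar> \<le> B * B"
      using Cauchy_Schwarz_ineq2[of "w a" "w a"]
        mult_mono[OF bounded bounded order_trans[OF norm_ge_zero bounded] norm_ge_zero]
      by (rule order_trans)
    then show ?thesis
      using equal \<eta>_nonneg[of a] abs_triangle_ineq4[of "inner (w a) (w a)" L] by simp
  qed
qed

lemma cesaro_mean_tendsto_gram_center:
  fixes w :: "nat \<Rightarrow> 'a::{real_inner, complete_space}"
  assumes gram: "\<And>a b. \<bar>inner (w a) (w b) - L\<bar> \<le> \<eta> a + \<eta> b + (if a = b then K else 0)"
    and "0 \<le> K" and \<eta>: "\<eta> \<longlonglongrightarrow> 0"
  shows "\<exists>z. cesaro_mean w \<longlonglongrightarrow> z \<and> (\<forall>b. \<bar>inner z (w b) - L\<bar> \<le> \<eta> b) \<and> inner z z = L"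
proof -
  define c where "c = cesaro_mean \<eta>"
  define e where "e N = c N + K / real (Suc N)" for N
  have c: "c \<longlonglongrightarrow> 0"
    unfolding c_def using \<eta> by (rule cesaro_mean_tendsto_zero)
  have e: "e \<longlonglongrightarrow> 0"
    unfolding e_def using c const_over_Suc_tendsto_zero by (rule tendsto_add_zero)
  have to_w: "\<bar>inner (cesaro_mean w N) (w b) - L\<bar> \<le> e N + \<eta> b" for N b
    using inner_cesaro_mean_bound[OF gram \<open>0 \<le> K\<close>, of N b] unfolding e_def c_def
    by (simp add: add_ac)
  have to_means: "\<bar>inner (cesaro_mean w N) (cesaro_mean w M) - L\<bar> \<le> e N + c M" for N M
    using inner_cesaro_means_bound[OF gram \<open>0 \<le> K\<close>, of N M] unfolding e_def c_def
    by (simp add: add_ac)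
  have "c M \<le> e M" for M
    unfolding e_def using \<open>0 \<le> K\<close> by simp
  then have "\<bar>inner (cesaro_mean w N) (cesaro_mean w M) - L\<bar> \<le> e N + e M" for N M
    using to_means[of N M] by (meson add_left_mono order_trans)
  then have "Cauchy (cesaro_mean w)"
    by (rule Cauchy_if_inner_near_const[OF e])
  then obtain z where z: "cesaro_mean w \<longlonglongrightarrow> z"
    using Cauchy_convergent convergent_def by blast
  have z_w: "\<bar>inner z (w b) - L\<bar> \<le> \<eta> b" for b
  proof (rule LIMSEQ_le)
    show "(\<lambda>N. \<bar>inner (cesaro_mean w N) (w b) - L\<bar>) \<longlonglongrightarrow> \<bar>inner z (w b) - L\<bar>"
      by (intro tendsto_intros z)
    show "(\<lambda>N. e N + \<eta> b) \<longlonglongrightarrow> \<eta> b"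
      using tendsto_add[OF e tendsto_const] by simp
  qed (use to_w in auto)
  have z_means: "\<bar>inner z (cesaro_mean w M) - L\<bar> \<le> c M" for M
  proof (rule LIMSEQ_le)
    show "(\<lambda>N. \<bar>inner (cesaro_mean w N) (cesaro_mean w M) - L\<bar>) \<longlonglongrightarrow>
        \<bar>inner z (cesaro_mean w M) - L\<bar>"
      by (intro tendsto_intros z)
    show "(\<lambda>N. e N + c M) \<longlonglongrightarrow> c M"
      using tendsto_add[OF e tendsto_const] by simp
  qed (use to_means in auto)
  have lim: "(\<lambda>M. \<bar>inner z (cesaro_mean w M) - L\<bar>) \<longlonglongrightarrow> \<bar>inner z z - L\<bar>"
    by (intro tendsto_intros z)
  have "\<bar>inner z z - L\<bar> \<le> 0"
    by (rule LIMSEQ_le[OF lim c]) (use z_means in auto)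
  with z z_w show ?thesis
    by auto
qed

lemma cesaro_mean_tendsto_asymptotically_orthogonal:
  fixes w :: "nat \<Rightarrow> 'a::{real_inner, complete_space}"
  assumes "\<And>a. norm (w a) \<le> B" and \<eta>: "\<eta> \<longlonglongrightarrow> 0"
    and "\<And>a b. a < b \<Longrightarrow> \<bar>inner (w a) (w b) - L\<bar> \<le> \<eta> a"
  shows "\<exists>z. cesaro_mean w \<longlonglongrightarrow> z \<and> asymptotically_orthogonal (\<lambda>a. w a - z)"
proof -
  note gram = offdiagonal_gram_bound_symmetric[of w B L \<eta>, OF assms(1,3)]
  have "0 \<le> B * B + \<bar>L\<bar>"
    by simp
  then obtain z where z: "cesaro_mean w \<longlonglongrightarrow> z"
    and z_w: "\<And>b. \<bar>inner z (w b) - L\<bar> \<le> \<eta> b" and z_z: "inner z z = L"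
    using cesaro_mean_tendsto_gram_center[OF gram _ \<eta>] by blast
  have "\<bar>inner (w a - z) (w b - z)\<bar> \<le> 2 * \<eta> a + 2 * \<eta> b" if "a \<noteq> b" for a b
  proof -
    have "inner (w a - z) (w b - z) =
        (inner (w a) (w b) - L) - (inner z (w a) - L) - (inner z (w b) - L)"
      unfolding z_z[symmetric] by (simp add: inner_diff_left inner_diff_right inner_commute)
    moreover have "\<bar>inner (w a) (w b) - L\<bar> \<le> \<eta> a + \<eta> b"
      using gram[of a b] that by simp
    ultimately show ?thesis
      using z_w[of a] z_w[of b] by (simp only: abs_le_iff) linarith
  qed
  moreover have "(\<lambda>a. 2 * \<eta> a) \<longlonglongrightarrow> 0"
    using tendsto_mult_right_zero[OF \<eta>] by simp
  ultimately have "asymptotically_orthogonal (\<lambda>a. w a - z)"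
    by (rule asymptotically_orthogonalI[rotated])
  with z show ?thesis
    by blast
qed

lemma bounded_seq_asymptotically_orthogonal_subseq:
  fixes w :: "nat \<Rightarrow> 'a::{real_inner, complete_space}"
  assumes "bounded (range w)"
  shows "\<exists>r z. strict_mono r \<and> cesaro_mean (\<lambda>a. w (r a)) \<longlonglongrightarrow> z \<and>
    asymptotically_orthogonal (\<lambda>a. w (r a) - z)"
proof -
  obtain B where B: "\<And>a. norm (w a) \<le> B"
    using assms by (auto simp: bounded_iff)
  have "\<bar>inner (w a) (w b)\<bar> \<le> B * B" for a b
    using Cauchy_Schwarz_ineq2[of "w a" "w b"]
      mult_mono[OF B B order_trans[OF norm_ge_zero B] norm_ge_zero]
    by (rule order_trans)
  then have gram_bounded: "bounded (range (case_prod (\<lambda>a b. inner (w a) (w b))))"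
    unfolding bounded_iff by (intro exI[of _ "B * B"]) auto
  obtain r L \<eta> where r: "strict_mono r" "\<eta> \<longlonglongrightarrow> 0"
    and "\<forall>a b. a < b \<longrightarrow> dist (inner (w (r a)) (w (r b))) L \<le> \<eta> a"
    using offdiagonal_convergent_subseq[OF gram_bounded] by blast
  then have "\<And>a b. a < b \<Longrightarrow> \<bar>inner (w (r a)) (w (r b)) - L\<bar> \<le> \<eta> a"
    by (simp add: dist_real_def)
  then obtain z where "cesaro_mean (\<lambda>a. w (r a)) \<longlonglongrightarrow> z" "asymptotically_orthogonal (\<lambda>a. w (r a) - z)"
    using cesaro_mean_tendsto_asymptotically_orthogonal[of "\<lambda>a. w (r a)" B, OF B r(2)] by blast
  with r show ?thesis by blast
qed

lemma nonexpansive_shrunk_fixed_point: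
  fixes C :: "'a::banach set"
  assumes "closed C" and "convex C" and "c \<in> C" and "T ` C \<subseteq> C" and "nonexpansive_on C T"
    and "0 \<le> t" and "t < 1"
  shows "\<exists>x\<in>C. (1 - t) *\<^sub>R c + t *\<^sub>R T x = x"
proof -
  have "\<exists>!x\<in>C. (1 - t) *\<^sub>R c + t *\<^sub>R T x = x"
  proof (rule Banach_fix)
    show "complete C"
      using \<open>closed C\<close> by (simp add: complete_eq_closed)
    show "(\<lambda>x. (1 - t) *\<^sub>R c + t *\<^sub>R T x) ` C \<subseteq> C"
      using assms(3,4,6,7) by (auto intro!: convexD[OF \<open>convex C\<close>])
    fix x y assume "x \<in> C" "y \<in> C"
    have "(1 - t) *\<^sub>R c + t *\<^sub>R T x - ((1 - t) *\<^sub>R c + t *\<^sub>R T y) = t *\<^sub>R (T x - T y)"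
      by (simp add: algebra_simps)
    then show "dist ((1 - t) *\<^sub>R c + t *\<^sub>R T x) ((1 - t) *\<^sub>R c + t *\<^sub>R T y) \<le> t * dist x y"
      using \<open>nonexpansive_on C T\<close> \<open>x \<in> C\<close> \<open>y \<in> C\<close> \<open>0 \<le> t\<close>
      unfolding nonexpansive_on_def dist_norm by (auto intro: mult_left_mono)
  qed (use assms in auto)
  then show ?thesis by blast
qed

lemma nonexpansive_approximate_fixed_points:
  fixes C :: "'a::banach set"
  assumes "C \<noteq> {}" and "bounded C" and "closed C" and "convex C"
    and "T ` C \<subseteq> C" and "nonexpansive_on C T"
  shows "\<exists>x. (\<forall>m. x m \<in> C) \<and> (\<lambda>m. T (x m) - x m) \<longlonglongrightarrow> 0"
proof -
  obtain c where "c \<in> C" using \<open>C \<noteq> {}\<close> by blast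
  obtain R where R: "\<And>y. y \<in> C \<Longrightarrow> norm y \<le> R"
    using \<open>bounded C\<close> by (auto simp: bounded_iff)
  define t where "t m = 1 - inverse (real (Suc m))" for m
  have "0 \<le> t m" "t m < 1" for m
    unfolding t_def by (auto simp: inverse_le_1_iff)
  then have "\<forall>m. \<exists>x\<in>C. (1 - t m) *\<^sub>R c + t m *\<^sub>R T x = x"
    using nonexpansive_shrunk_fixed_point[OF assms(3,4) \<open>c \<in> C\<close> assms(5,6)] by blast
  then obtain x where x: "\<And>m. x m \<in> C" and x_fixed: "\<And>m. (1 - t m) *\<^sub>R c + t m *\<^sub>R T (x m) = x m"
    by metis
  have "norm (T (x m) - x m) \<le> (R + R) / real (Suc m)" for m
  proof -
    have "T (x m) \<in> C"
      using assms(5) x[of m] by blast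
    have "T (x m) - x m = T (x m) - ((1 - t m) *\<^sub>R c + t m *\<^sub>R T (x m))"
      using x_fixed[of m] by simp
    also have "\<dots> = (1 - t m) *\<^sub>R (T (x m) - c)"
      by (simp add: algebra_simps)
    finally have "T (x m) - x m = (1 - t m) *\<^sub>R (T (x m) - c)" .
    moreover have "norm (T (x m) - c) \<le> R + R"
      using norm_triangle_ineq4[of "T (x m)" c] R[OF \<open>T (x m) \<in> C\<close>] R[OF \<open>c \<in> C\<close>] by linarith
    moreover have "1 - t m = inverse (real (Suc m))"
      unfolding t_def by simp
    ultimately have "norm (T (x m) - x m) \<le> inverse (real (Suc m)) * (R + R)"
      by (simp add: mult_left_mono)
    then show ?thesis
      by (simp add: divide_inverse_commute)
  qed
  then have "eventually (\<lambda>m. norm (T (x m) - x m) \<le> (R + R) / real (Suc m)) sequentially"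
    by simp
  then have "(\<lambda>m. T (x m) - x m) \<longlonglongrightarrow> 0"
    using const_over_Suc_tendsto_zero by (rule Lim_null_comparison)
  with x show ?thesis by blast
qed

lemma norm_le_cm_block: "A \<subseteq> {1..n} \<Longrightarrow> norm (\<Sum>k\<in>A. v (i + k) - y) \<le> cm_block n v y i"
  unfolding cm_block_def by (rule Max_ge) auto

lemma cm_block_le:
  "(\<And>A. A \<subseteq> {1..n} \<Longrightarrow> norm (\<Sum>k\<in>A. v (i + k) - y) \<le> c) \<Longrightarrow> cm_block n v y i \<le> c"
  unfolding cm_block_def by (rule Max.boundedI) auto

lemma norm_sum_squared_le_almost_orthogonal:
  fixes h :: "'i \<Rightarrow> 'a::real_inner"
  assumes "finite A" and "0 \<le> \<epsilon>"
    and norm_h: "\<And>k. k \<in> A \<Longrightarrow> norm (h k) \<le> D"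
    and inner_h: "\<And>k l. k \<in> A \<Longrightarrow> l \<in> A \<Longrightarrow> k \<noteq> l \<Longrightarrow> \<bar>inner (h k) (h l)\<bar> \<le> \<epsilon>"
  shows "(norm (\<Sum>k\<in>A. h k))\<^sup>2 \<le> real (card A) * D\<^sup>2 + (real (card A))\<^sup>2 * \<epsilon>"
proof -
  have pointwise: "inner (h k) (h l) \<le> (if k = l then D\<^sup>2 else 0) + \<epsilon>" if "k \<in> A" "l \<in> A" for k l
  proof (cases "k = l")
    case True
    have "inner (h k) (h k) \<le> D\<^sup>2"
      unfolding power2_norm_eq_inner[symmetric] using norm_h[OF that(1)] by (simp add: power_mono)
    then show ?thesis using True \<open>0 \<le> \<epsilon>\<close> by simp
  next
    case False
    then show ?thesis using inner_h[OF that False] by simp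
  qed
  then have "(norm (\<Sum>k\<in>A. h k))\<^sup>2 \<le> (\<Sum>l\<in>A. \<Sum>k\<in>A. (if k = l then D\<^sup>2 else 0) + \<epsilon>)"
    unfolding power2_norm_eq_inner inner_sum_left inner_sum_right by (intro sum_mono pointwise)
  also have "\<dots> = real (card A) * D\<^sup>2 + (real (card A))\<^sup>2 * \<epsilon>"
    using \<open>finite A\<close> by (simp add: sum.distrib power2_eq_square algebra_simps)
  finally show ?thesis .
qed

lemma norm_block_sum_squared_le:
  fixes u :: "nat \<Rightarrow> 'a::real_normed_vector" and J :: "'a \<Rightarrow> 'b::real_inner"
  assumes "linear J" and lower: "\<And>x. norm x \<le> KI * norm (J x)"
    and D: "\<And>a. norm (J (u a) - J z) \<le> D" and "0 \<le> \<epsilon>"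
    and near: "\<And>a b. a \<ge> N \<Longrightarrow> b \<ge> N \<Longrightarrow> a \<noteq> b \<Longrightarrow>
      \<bar>inner (J (u a) - J z) (J (u b) - J z)\<bar> \<le> \<epsilon>"
    and "i \<ge> N" and "A \<subseteq> {1..n}"
  shows "(norm (\<Sum>k\<in>A. u (i + k) - z))\<^sup>2 \<le> KI\<^sup>2 * (real n * D\<^sup>2 + (real n)\<^sup>2 * \<epsilon>)"
proof -
  have "finite A" and card: "real (card A) \<le> real n"
    using \<open>A \<subseteq> {1..n}\<close> finite_subset card_mono[OF _ \<open>A \<subseteq> {1..n}\<close>] by auto
  have "(norm (\<Sum>k\<in>A. J (u (i + k)) - J z))\<^sup>2 \<le> real (card A) * D\<^sup>2 + (real (card A))\<^sup>2 * \<epsilon>"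
  proof (rule norm_sum_squared_le_almost_orthogonal)
    fix k l assume "k \<in> A" "l \<in> A" "k \<noteq> l"
    then show "\<bar>inner (J (u (i + k)) - J z) (J (u (i + l)) - J z)\<bar> \<le> \<epsilon>"
      using \<open>i \<ge> N\<close> \<open>A \<subseteq> {1..n}\<close> by (intro near) auto
  qed (use \<open>finite A\<close> \<open>0 \<le> \<epsilon>\<close> D in auto)
  also have "\<dots> \<le> real n * D\<^sup>2 + (real n)\<^sup>2 * \<epsilon>"
    using card \<open>0 \<le> \<epsilon>\<close> by (intro add_mono mult_right_mono power_mono) auto
  finally have J_bound: "(norm (J (\<Sum>k\<in>A. u (i + k) - z)))\<^sup>2 \<le> real n * D\<^sup>2 + (real n)\<^sup>2 * \<epsilon>"
    using \<open>linear J\<close> by (simp add: linear_sum linear_diff)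
  have "(norm (\<Sum>k\<in>A. u (i + k) - z))\<^sup>2 \<le> (KI * norm (J (\<Sum>k\<in>A. u (i + k) - z)))\<^sup>2"
    using lower by (rule power_mono) simp
  also have "\<dots> = KI\<^sup>2 * (norm (J (\<Sum>k\<in>A. u (i + k) - z)))\<^sup>2"
    by (simp add: power_mult_distrib)
  also have "\<dots> \<le> KI\<^sup>2 * (real n * D\<^sup>2 + (real n)\<^sup>2 * \<epsilon>)"
    using J_bound by (rule mult_left_mono) simp
  finally show ?thesis .
qed

lemma cm_block_eventually_le:
  fixes u :: "nat \<Rightarrow> 'a::real_normed_vector" and J :: "'a \<Rightarrow> 'b::real_inner"
  assumes "linear J" and "0 < KI" and lower: "\<And>x. norm x \<le> KI * norm (J x)"
    and D: "\<And>a. norm (J (u a) - J z) \<le> D"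
    and orth: "asymptotically_orthogonal (\<lambda>a. J (u a) - J z)" and "0 < \<delta>"
  shows "\<exists>n>0. eventually (\<lambda>i. cm_block n u z i \<le> real n * \<delta>) sequentially"
proof -
  \<comment> \<open>Chosen so that \<open>KI\<^sup>2 (n D\<^sup>2 + n\<^sup>2 \<epsilon>) \<le> (n \<delta>)\<^sup>2\<close> as soon as \<open>D\<^sup>2 \<le> n \<epsilon>\<close>.\<close>
  define \<epsilon> where "\<epsilon> = (\<delta> / KI)\<^sup>2 / 2"
  have "0 < \<epsilon>"
    unfolding \<epsilon>_def using \<open>0 < \<delta>\<close> \<open>0 < KI\<close> by simp
  then obtain N where N: "\<And>a b. a \<ge> N \<Longrightarrow> b \<ge> N \<Longrightarrow> a \<noteq> b \<Longrightarrow>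
      \<bar>inner (J (u a) - J z) (J (u b) - J z)\<bar> \<le> \<epsilon>"
    using orth unfolding asymptotically_orthogonal_def by blast
  obtain n :: nat where n: "D\<^sup>2 / \<epsilon> < real n"
    using reals_Archimedean2 by blast
  have "0 < n"
    using order_le_less_trans[OF divide_nonneg_pos[OF zero_le_power2 \<open>0 < \<epsilon>\<close>] n] by simp
  have Dn: "D\<^sup>2 \<le> real n * \<epsilon>"
    using n \<open>0 < \<epsilon>\<close> by (simp add: divide_less_eq)
  have "norm (\<Sum>k\<in>A. u (i + k) - z) \<le> real n * \<delta>" if "i \<ge> N" "A \<subseteq> {1..n}" for i A
  proof -
    have "(norm (\<Sum>k\<in>A. u (i + k) - z))\<^sup>2 \<le> KI\<^sup>2 * (real n * D\<^sup>2 + (real n)\<^sup>2 * \<epsilon>)"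
      by (rule norm_block_sum_squared_le[OF \<open>linear J\<close> lower D less_imp_le[OF \<open>0 < \<epsilon>\<close>] N that])
    also have "\<dots> \<le> KI\<^sup>2 * (real n * (real n * \<epsilon>) + (real n)\<^sup>2 * \<epsilon>)"
      using Dn by (intro mult_left_mono add_right_mono) auto
    also have "\<dots> = (real n * \<delta>)\<^sup>2"
      unfolding \<epsilon>_def using \<open>0 < KI\<close> by (simp add: power2_eq_square field_simps)
    finally show ?thesis
      by (rule power2_le_imp_le) (use \<open>0 < \<delta>\<close> in simp)
  qed
  then have "\<forall>i\<ge>N. cm_block n u z i \<le> real n * \<delta>"
    by (auto intro!: cm_block_le)
  then have "eventually (\<lambda>i. cm_block n u z i \<le> real n * \<delta>) sequentially"
    unfolding eventually_sequentially by blast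
  with \<open>0 < n\<close> show ?thesis by blast
qed

lemma card_mult_dist_le_sum_displacements:
  fixes p q :: "'i \<Rightarrow> 'a::real_normed_vector"
  shows "real (card A) * norm (z - w) \<le>
    norm (\<Sum>k\<in>A. q k - w) + norm (\<Sum>k\<in>A. p k - z) + (\<Sum>k\<in>A. norm (q k - p k))"
proof -
  have "(\<Sum>k\<in>A. q k - w) - (\<Sum>k\<in>A. p k - z) - (\<Sum>k\<in>A. q k - p k) =
      (\<Sum>k\<in>A. (q k - w) - (p k - z) - (q k - p k))"
    by (simp only: sum_subtractf)
  also have "\<dots> = (\<Sum>k\<in>A. z - w)"
    by (simp add: algebra_simps)
  also have "\<dots> = real (card A) *\<^sub>R (z - w)"
    by (rule sum_constant_scaleR)
  finally have "real (card A) * norm (z - w) =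
      norm ((\<Sum>k\<in>A. q k - w) - (\<Sum>k\<in>A. p k - z) - (\<Sum>k\<in>A. q k - p k))"
    by simp
  also have "\<dots> \<le> norm (\<Sum>k\<in>A. q k - w) + norm (\<Sum>k\<in>A. p k - z) + norm (\<Sum>k\<in>A. q k - p k)"
    using norm_triangle_ineq4[of "(\<Sum>k\<in>A. q k - w) - (\<Sum>k\<in>A. p k - z)" "\<Sum>k\<in>A. q k - p k"]
      norm_triangle_ineq4[of "\<Sum>k\<in>A. q k - w" "\<Sum>k\<in>A. p k - z"] by linarith
  also have "\<dots> \<le> norm (\<Sum>k\<in>A. q k - w) + norm (\<Sum>k\<in>A. p k - z) + (\<Sum>k\<in>A. norm (q k - p k))"
    by (intro add_left_mono norm_sum)
  finally show ?thesis .
qed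

lemma cm_block_image_ge:
  fixes T :: "'a::real_normed_vector \<Rightarrow> 'a"
  assumes "\<And>k. k \<in> {1..n} \<Longrightarrow> norm (T (u (i + k)) - u (i + k)) \<le> \<rho>"
  shows "real n * (norm (z - T z) - \<rho>) - cm_block n u z i \<le> cm_block n (\<lambda>j. T (u j)) (T z) i"
proof -
  have "(\<Sum>k\<in>{1..n}. norm (T (u (i + k)) - u (i + k))) \<le> (\<Sum>k\<in>{1..n}. \<rho>)"
    using assms by (rule sum_mono)
  then have "(\<Sum>k\<in>{1..n}. norm (T (u (i + k)) - u (i + k))) \<le> real n * \<rho>"
    by simp
  moreover have "norm (\<Sum>k\<in>{1..n}. u (i + k) - z) \<le> cm_block n u z i"
    by (rule norm_le_cm_block) simp
  moreover have "norm (\<Sum>k\<in>{1..n}. T (u (i + k)) - T z) \<le> cm_block n (\<lambda>j. T (u j)) (T z) i"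
    using norm_le_cm_block[of "{1..n}" n "\<lambda>j. T (u j)" i "T z"] by simp
  moreover have "real n * norm (z - T z) \<le> norm (\<Sum>k\<in>{1..n}. T (u (i + k)) - T z) +
      norm (\<Sum>k\<in>{1..n}. u (i + k) - z) + (\<Sum>k\<in>{1..n}. norm (T (u (i + k)) - u (i + k)))"
    using card_mult_dist_le_sum_displacements[of "{1..n}" z "T z"
        "\<lambda>k. T (u (i + k))" "\<lambda>k. u (i + k)"]
    by simp
  ultimately show ?thesis
    unfolding right_diff_distrib by linarith
qed

lemma cm_nonexpansive_fixes_asymptotic_center:
  fixes J :: "'a::real_normed_vector \<Rightarrow> 'b::real_inner"
  assumes cm: "cm_nonexpansive_on C T" and "z \<in> C" and "\<And>a. u a \<in> C"
    and approx: "(\<lambda>a. T (u a) - u a) \<longlonglongrightarrow> 0"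
    and "linear J" and "0 < KI" and "\<And>x. norm x \<le> KI * norm (J x)"
    and "\<And>a. norm (J (u a) - J z) \<le> D"
    and "asymptotically_orthogonal (\<lambda>a. J (u a) - J z)"
  shows "T z = z"
proof (rule ccontr)
  assume "T z \<noteq> z"
  define d where "d = norm (z - T z)"
  have "0 < d"
    unfolding d_def using \<open>T z \<noteq> z\<close> by simp
  then have "0 < d / 4"
    by simp
  then obtain n where "0 < n"
    and "eventually (\<lambda>i. cm_block n u z i \<le> real n * (d / 4)) sequentially"
    using cm_block_eventually_le[OF assms(5-9)] by blast
  then have upper: "eventually (\<lambda>i. cm_block n u z i \<le> real n * d / 4) sequentially"
    by simp
  obtain N where N: "\<And>j. j \<ge> N \<Longrightarrow> norm (T (u j) - u j) < d / 4"
    using order_tendstoD(2)[OF tendsto_norm_zero[OF approx] \<open>0 < d / 4\<close>]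
    unfolding eventually_sequentially by blast
  have lower: "eventually (\<lambda>i. real n * d / 2 \<le> cm_block n (\<lambda>j. T (u j)) (T z) i) sequentially"
    using upper eventually_ge_at_top[of N]
  proof eventually_elim
    case (elim i)
    have "real n * (norm (z - T z) - d / 4) - cm_block n u z i \<le> cm_block n (\<lambda>j. T (u j)) (T z) i"
      by (rule cm_block_image_ge) (use N elim(2) in \<open>auto intro: less_imp_le\<close>)
    with elim(1) show ?case
      unfolding d_def[symmetric] right_diff_distrib times_divide_eq_right by linarith
  qed
  have "ereal (real n * d / 2) \<le> limsup (\<lambda>i. ereal (cm_block n (\<lambda>j. T (u j)) (T z) i))"
    using lower by (intro le_Limsup trivial_limit_sequentially) (simp add: eventually_mono)
  also have "\<dots> \<le> limsup (\<lambda>i. ereal (cm_block n u z i))"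
    using cm \<open>z \<in> C\<close> assms(3) unfolding cm_nonexpansive_on_def by blast
  also have "\<dots> \<le> ereal (real n * d / 4)"
    using upper by (intro Limsup_bounded) (simp add: eventually_mono)
  finally have "real n * d / 2 \<le> real n * d / 4"
    by simp
  moreover have "0 < real n * d"
    using \<open>0 < n\<close> \<open>0 < d\<close> by simp
  ultimately show False
    by linarith
qed

lemma isomorphic_hilbert_asymptotically_orthogonal_subseq:
  fixes J :: "'a::real_normed_vector \<Rightarrow> 'b::{real_inner, complete_space}"
    and u :: "nat \<Rightarrow> 'a"
  assumes "bounded_linear J" and "bij J" and "bounded_linear (inv J)"
    and "bounded C" and "closed C" and "convex C" and u: "\<And>a. u a \<in> C"
  shows "\<exists>r z. strict_mono r \<and> z \<in> C \<and> asymptotically_orthogonal (\<lambda>a. J (u (r a)) - J z)"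
proof -
  have Ju_bounded: "bounded (range (\<lambda>a. J (u a)))"
    using bounded_linear_image[OF assms(4,1)] by (rule bounded_subset) (use u in auto)
  obtain r y where r: "strict_mono r"
    and y: "cesaro_mean (\<lambda>a. J (u (r a))) \<longlonglongrightarrow> y"
    and orth: "asymptotically_orthogonal (\<lambda>a. J (u (r a)) - y)"
    using bounded_seq_asymptotically_orthogonal_subseq[OF Ju_bounded] by blast
  have inv_J: "inv J (J x) = x" for x
    using \<open>bij J\<close> by (simp add: bij_is_inj)
  have J_inv: "J (inv J y) = y"
    using \<open>bij J\<close> by (simp add: bij_is_surj surj_f_inv_f)
  have "inv J (cesaro_mean (\<lambda>a. J (u (r a))) N) = cesaro_mean (\<lambda>a. u (r a)) N" for N
    by (simp add: linear_cesaro_mean[OF bounded_linear.linear[OF assms(1)], symmetric] inv_J)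
  then have "cesaro_mean (\<lambda>a. u (r a)) \<longlonglongrightarrow> inv J y"
    using bounded_linear.tendsto[OF assms(3) y] by simp
  moreover have "cesaro_mean (\<lambda>a. u (r a)) N \<in> C" for N
    using \<open>convex C\<close> u by (rule cesaro_mean_in_convex)
  ultimately have "inv J y \<in> C"
    using closed_sequentially[OF \<open>closed C\<close>] by blast
  moreover have "asymptotically_orthogonal (\<lambda>a. J (u (r a)) - J (inv J y))"
    using orth by (simp only: J_inv)
  ultimately show ?thesis
    using r by blast
qed

theorem corollary4p11:
  fixes J :: "'a::banach \<Rightarrow> 'b::{real_inner, complete_space}"
    and C :: "'a set" and T :: "'a \<Rightarrow> 'a"
  assumes "bounded_linear J" and "bij J" and "bounded_linear (inv J)"
    and "C \<noteq> {}" and "bounded C" and "closed C" and "convex C"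
    and "T ` C \<subseteq> C"
    and "cm_nonexpansive_on C T"
  shows "\<exists>x\<in>C. T x = x"
proof -
  have "nonexpansive_on C T"
    using assms(9) by (simp add: cm_nonexpansive_on_def)
  then obtain x where x: "\<And>m. x m \<in> C" and approx: "(\<lambda>m. T (x m) - x m) \<longlonglongrightarrow> 0"
    using nonexpansive_approximate_fixed_points[OF assms(4-8)] by blast
  obtain r z where r: "strict_mono r" and "z \<in> C"
    and orth: "asymptotically_orthogonal (\<lambda>a. J (x (r a)) - J z)"
    using isomorphic_hilbert_asymptotically_orthogonal_subseq[where u = x, OF assms(1-3,5-7) x]
    by blast
  obtain KI where "0 < KI" and KI: "\<And>y. norm (inv J y) \<le> norm y * KI"
    using bounded_linear.pos_bounded[OF assms(3)] by blast
  have lower: "norm y \<le> KI * norm (J y)" for y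
    using KI[of "J y"] \<open>bij J\<close> by (simp add: bij_is_inj mult.commute)
  obtain R where R: "\<And>y. y \<in> J ` C \<Longrightarrow> norm y \<le> R"
    using bounded_linear_image[OF assms(5,1)] by (auto simp: bounded_iff)
  have bounded: "norm (J (x (r a)) - J z) \<le> R + R" for a
    using norm_triangle_ineq4[of "J (x (r a))" "J z"]
      R[OF imageI[OF x[of "r a"]]] R[OF imageI[OF \<open>z \<in> C\<close>]]
    by linarith
  have "(\<lambda>a. T (x (r a)) - x (r a)) \<longlonglongrightarrow> 0"
    using LIMSEQ_subseq_LIMSEQ[OF approx r] by (simp add: o_def)
  then have "T z = z"
    by (rule cm_nonexpansive_fixes_asymptotic_center[where u = "\<lambda>a. x (r a)",
          OF assms(9) \<open>z \<in> C\<close> x _ bounded_linear.linear[OF assms(1)] \<open>0 < KI\<close> lower bounded orth])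
  with \<open>z \<in> C\<close> show ?thesis by blast
qed

end
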